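(* In the FRNS model, suppose the performance vector at the beginning of the last week (week 3) is $W=[2,2,0,0]$. Then for every weight vector $V=[v_1,v_2,v_3,v_4]$ with $v_1\ge v_2\ge v_3\ge v_4>0$, $P^{(1)}_{(1,1,1,1)}(3,W,V)\ge P^{(1)}_{(0,1,1,1)}(3,W,V)$; that is, $a_1$ should try to win its last game.
   Context: FRNS model: four teams $a_1,\dots,a_4$ with weights $V=[v_1,v_2,v_3,v_4]$; $p_{ij}=v_i/(v_i+v_j)$. Regular season: week 1: $a_1$ vs $a_4$, $a_2$ vs $a_3$; week 2: $a_1$ vs $a_3$, $a_2$ vs $a_4$; week 3: $a_1$ vs $a_2$, $a_3$ vs $a_4$. Teams $a_2,a_3,a_4$ always try to win; $a_1$ either tries to win or loses intentionally. If both teams try, $a_i$ beats $a_j$ with probability $p_{ij}$ (games independent); if $a_1$ loses intentionally it loses that game with probability 1. $W=[W_1,\dots,W_4]$ gives numbers of wins before week $m$. After the season teams are seeded by total wins (descending), ties broken by assigning the tied seed positions uniformly at random; knockout tournament: seed 1 vs seed 4, seed 2 vs seed 3, winners meet in the final, each tournament game won by $a_i$ over $a_j$ with probability $p_{ij}$. $P^{(1)}_{\pi}(m,W,V)$ is the probability that $a_1$ wins the tournament when, in week $m$ starting from $W$, $a_1$ tries to win ($\pi=(1,1,1,1)$) or loses intentionally ($\pi=(0,1,1,1)$). *)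

theory Defs
  imports Complex_Main
begin

text \<open>FRNS model with four teams indexed 1,2,3,4. Weights V :: nat => real,
  win records W :: nat => nat.\<close>

definition pw :: "(nat \<Rightarrow> real) \<Rightarrow> nat \<Rightarrow> nat \<Rightarrow> real" where
  "pw V i j = V i / (V i + V j)"

fun games :: "nat \<Rightarrow> (nat \<times> nat) list" where
  "games (Suc 0) = [(1,4),(2,3)]"
| "games (Suc (Suc 0)) = [(1,3),(2,4)]"
| "games (Suc (Suc (Suc 0))) = [(1,2),(3,4)]"
| "games _ = []"

text \<open>A policy pol assigns 1 (tries to win) or 0 (loses intentionally) to each team.
  Probability that i beats j in a regular-season game under policy pol.\<close>
definition gp :: "(nat \<Rightarrow> nat) \<Rightarrow> (nat \<Rightarrow> real) \<Rightarrow> nat \<Rightarrow> nat \<Rightarrow> real" where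
  "gp pol V i j = (if pol i = 0 then 0 else if pol j = 0 then 1 else pw V i j)"

definition all_try :: "nat \<Rightarrow> nat" where
  "all_try = (\<lambda>_. 1)"

definition a1_loses :: "nat \<Rightarrow> nat" where
  "a1_loses = (\<lambda>i. if i = 1 then 0 else 1)"

text \<open>Seedings consistent with the final win records (descending wins). Uniform random
  tie-breaking = uniform distribution over this set.\<close>
definition seedings :: "(nat \<Rightarrow> nat) \<Rightarrow> nat list set" where
  "seedings Wf = {s. distinct s \<and> set s = {1,2,3,4} \<and> sorted_wrt (\<lambda>x y. Wf y \<le> Wf x) s}"

text \<open>Probability that team i wins the knockout tournament with seeding s
  (seed 1 vs seed 4, seed 2 vs seed 3, winners meet in the final).\<close>
definition champ :: "(nat \<Rightarrow> real) \<Rightarrow> nat list \<Rightarrow> nat \<Rightarrow> real" where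
  "champ V s i =
    (let a = s!0; b = s!1; c = s!2; d = s!3 in
     \<Sum>x\<in>{a,d}. \<Sum>y\<in>{b,c}.
       (if x = a then pw V a d else pw V d a) * (if y = b then pw V b c else pw V c b) *
       (if i = x then pw V x y else if i = y then pw V y x else 0))"

definition tourn :: "(nat \<Rightarrow> real) \<Rightarrow> (nat \<Rightarrow> nat) \<Rightarrow> real" where
  "tourn V Wf = (\<Sum>s\<in>seedings Wf. champ V s 1) / real (card (seedings Wf))"

definition week_step ::
  "((nat \<Rightarrow> nat) \<Rightarrow> real) \<Rightarrow> (nat \<Rightarrow> nat) \<Rightarrow> (nat \<Rightarrow> real) \<Rightarrow> nat \<Rightarrow> (nat \<Rightarrow> nat) \<Rightarrow> real" where
  "week_step f pol V m W =
    (let (a,b) = games m ! 0; (c,d) = games m ! 1 in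
       gp pol V a b * gp pol V c d * f (W(a := W a + 1, c := W c + 1))
     + gp pol V a b * gp pol V d c * f (W(a := W a + 1, d := W d + 1))
     + gp pol V b a * gp pol V c d * f (W(b := W b + 1, c := W c + 1))
     + gp pol V b a * gp pol V d c * f (W(b := W b + 1, d := W d + 1)))"

fun rest :: "nat \<Rightarrow> (nat \<Rightarrow> real) \<Rightarrow> nat \<Rightarrow> (nat \<Rightarrow> nat) \<Rightarrow> real" where
  "rest 0 V m W = tourn V W"
| "rest (Suc k) V m W = week_step (rest k V (Suc m)) all_try V m W"

text \<open>P^(1)_pi(m,W,V): probability that a1 wins the tournament when week m is played
  under policy pol starting from W (later weeks: all teams try).\<close>
definition P1 :: "(nat \<Rightarrow> nat) \<Rightarrow> nat \<Rightarrow> (nat \<Rightarrow> nat) \<Rightarrow> (nat \<Rightarrow> real) \<Rightarrow> real" where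
  "P1 pol m W V = week_step (rest (3 - m) V (Suc m)) pol V m W"

end

theory Submission
  imports Defs
begin

(* With W = [2,2,0,0], whichever way the game of a1 against a2 goes, a1 ends among the top
   two seeds and the records become pairwise distinct, so the seeding is determined.  If a1 beats
   a2 it is seeded first and meets the loser of a3 against a4 in the semifinal; if it loses it is
   seeded second and meets the winner.  Hence
     P_try - P_lose = p12 (p34 - p43) (A - B),
   where A and B are the probabilities that a1 wins the tournament when its semifinal opponent is
   a4, resp. a3.  Both factors p34 - p43 and A - B are nonnegative because v3 >= v4: the stronger
   of a3, a4 is more likely to win their game, and a weaker semifinal opponent is better. *)

lemma seedings_eq_singleton:
  assumes "inj_on Wf {1,2,3,4}" and "s\<^sub>0 \<in> seedings Wf"
  shows "seedings Wf = {s\<^sub>0}"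
proof -
  have "rev (map Wf s) = rev (map Wf s\<^sub>0)" if "s \<in> seedings Wf" for s
  proof (rule sorted_distinct_set_unique)
    show "sorted (rev (map Wf s))" "sorted (rev (map Wf s\<^sub>0))"
      using that assms(2) by (simp_all add: seedings_def sorted_wrt_rev sorted_wrt_map)
    show "distinct (rev (map Wf s))" "distinct (rev (map Wf s\<^sub>0))"
      using that assms by (simp_all add: seedings_def distinct_map)
    show "set (rev (map Wf s)) = set (rev (map Wf s\<^sub>0))"
      using that assms(2) by (simp add: seedings_def)
  qed
  then have "s = s\<^sub>0" if "s \<in> seedings Wf" for s
    using that assms by (simp add: seedings_def inj_on_map_eq_map)
  with assms(2) show ?thesis by blast
qed

lemma tourn_eq_champ:
  assumes "inj_on Wf {1,2,3,4}" and "s \<in> seedings Wf"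
  shows "tourn V Wf = champ V s 1"
  using seedings_eq_singleton[OF assms] by (simp add: tourn_def)

definition bracket_win :: "(nat \<Rightarrow> real) \<Rightarrow> nat \<Rightarrow> nat \<Rightarrow> nat \<Rightarrow> nat \<Rightarrow> real" where
  "bracket_win V i x y z = pw V i x * (pw V y z * pw V i y + pw V z y * pw V i z)"

lemma champ_first_seed:
  assumes "distinct [a,b,c,d]"
  shows "champ V [a,b,c,d] a = bracket_win V a d b c"
  using assms by (simp add: champ_def bracket_win_def algebra_simps)

lemma champ_second_seed:
  assumes "distinct [a,b,c,d]"
  shows "champ V [a,b,c,d] b = bracket_win V b c a d"
  using assms by (simp add: champ_def bracket_win_def algebra_simps)

lemma pw_swap:
  assumes "V i + V j \<noteq> 0"
  shows "pw V j i = 1 - pw V i j"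
  using assms by (simp add: pw_def field_simps)

lemma pw_swap_le:
  assumes "V j \<le> V i" and "V i + V j > 0"
  shows "pw V j i \<le> pw V i j"
  using assms by (simp add: pw_def add.commute divide_right_mono)

lemma bracket_win_weaker_semifinal_opponent:
  assumes pos: "V i > 0" "V j > 0" "V k > 0" "V l > 0" and weaker: "V l \<le> V k"
  shows "bracket_win V i k j l \<le> bracket_win V i l j k"
proof -
  have "bracket_win V i l j k - bracket_win V i k j l
      = 2 * (V i * V j)\<^sup>2 * (V k - V l)
        / ((V i + V j) * (V i + V k) * (V i + V l) * (V j + V k) * (V j + V l))"
  proof -
    have "V i + V j > 0" "V i + V k > 0" "V i + V l > 0" "V j + V k > 0" "V j + V l > 0"
      using pos by simp_all
    then show ?thesis
      unfolding bracket_win_def pw_def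
      by (simp add: divide_simps add.commute[of "V k" "V j"] add.commute[of "V l" "V j"])
        (simp add: algebra_simps power2_eq_square)
  qed
  also have "\<dots> \<ge> 0"
    using pos weaker by simp
  finally show ?thesis by simp
qed

lemma P1_last_week:
  "P1 pol 3 W V =
      gp pol V 1 2 * gp pol V 3 4 * tourn V (W(1 := W 1 + 1, 3 := W 3 + 1))
    + gp pol V 1 2 * gp pol V 4 3 * tourn V (W(1 := W 1 + 1, 4 := W 4 + 1))
    + gp pol V 2 1 * gp pol V 3 4 * tourn V (W(2 := W 2 + 1, 3 := W 3 + 1))
    + gp pol V 2 1 * gp pol V 4 3 * tourn V (W(2 := W 2 + 1, 4 := W 4 + 1))"
proof -
  have "games 3 = [(1,2),(3,4)]" by (simp add: numeral_eq_Suc)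
  then show ?thesis by (simp add: P1_def week_step_def)
qed

lemma tourn_after_last_week:
  assumes "W 1 = 2" and "W 2 = 2" and "W 3 = 0" and "W 4 = 0"
  shows "tourn V (W(1 := W 1 + 1, 3 := W 3 + 1)) = bracket_win V 1 4 2 3"
    and "tourn V (W(1 := W 1 + 1, 4 := W 4 + 1)) = bracket_win V 1 3 2 4"
    and "tourn V (W(2 := W 2 + 1, 3 := W 3 + 1)) = bracket_win V 1 3 2 4"
    and "tourn V (W(2 := W 2 + 1, 4 := W 4 + 1)) = bracket_win V 1 4 2 3"
proof -
  have "W (Suc 0) = 2" using assms(1) by simp
  note records = assms \<open>W (Suc 0) = 2\<close> seedings_def insert_commute
  show "tourn V (W(1 := W 1 + 1, 3 := W 3 + 1)) = bracket_win V 1 4 2 3"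
    by (subst tourn_eq_champ[where s = "[1,2,3,4]"]) (simp_all add: records champ_first_seed)
  show "tourn V (W(1 := W 1 + 1, 4 := W 4 + 1)) = bracket_win V 1 3 2 4"
    by (subst tourn_eq_champ[where s = "[1,2,4,3]"]) (simp_all add: records champ_first_seed)
  show "tourn V (W(2 := W 2 + 1, 3 := W 3 + 1)) = bracket_win V 1 3 2 4"
    by (subst tourn_eq_champ[where s = "[2,1,3,4]"]) (simp_all add: records champ_second_seed)
  show "tourn V (W(2 := W 2 + 1, 4 := W 4 + 1)) = bracket_win V 1 4 2 3"
    by (subst tourn_eq_champ[where s = "[2,1,4,3]"]) (simp_all add: records champ_second_seed)
qed

lemma P1_try_minus_lose_last_week:
  assumes "W 1 = 2" and "W 2 = 2" and "W 3 = 0" and "W 4 = 0"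
    and "V 1 + V 2 \<noteq> 0" and "V 3 + V 4 \<noteq> 0"
  shows "P1 all_try 3 W V - P1 a1_loses 3 W V
    = pw V 1 2 * (pw V 3 4 - pw V 4 3) * (bracket_win V 1 4 2 3 - bracket_win V 1 3 2 4)"
proof -
  note tourn_values = tourn_after_last_week[OF assms(1-4), of V]
  have try_win: "P1 all_try 3 W V
      = pw V 1 2 * pw V 3 4 * bracket_win V 1 4 2 3 + pw V 1 2 * pw V 4 3 * bracket_win V 1 3 2 4
      + pw V 2 1 * pw V 3 4 * bracket_win V 1 3 2 4 + pw V 2 1 * pw V 4 3 * bracket_win V 1 4 2 3"
    unfolding P1_last_week tourn_values by (simp add: gp_def all_try_def)
  have lose: "P1 a1_loses 3 W V = pw V 3 4 * bracket_win V 1 3 2 4 + pw V 4 3 * bracket_win V 1 4 2 3"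
    unfolding P1_last_week tourn_values by (simp add: gp_def a1_loses_def)
  show ?thesis
    unfolding try_win lose pw_swap[OF assms(5)] pw_swap[OF assms(6)] by (simp add: algebra_simps)
qed

theorem theorem3:
  fixes V :: "nat \<Rightarrow> real" and W :: "nat \<Rightarrow> nat"
  assumes "W 1 = 2" and "W 2 = 2" and "W 3 = 0" and "W 4 = 0"
    and "V 1 \<ge> V 2" and "V 2 \<ge> V 3" and "V 3 \<ge> V 4" and "V 4 > 0"
  shows "P1 all_try 3 W V \<ge> P1 a1_loses 3 W V"
proof -
  have pos: "V 1 > 0" "V 2 > 0" "V 3 > 0" "V 4 > 0" using assms(5-8) by linarith+
  have "pw V 1 2 \<ge> 0" using pos by (simp add: pw_def)
  moreover have "pw V 4 3 \<le> pw V 3 4" using pw_swap_le pos assms(7) by simp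
  moreover have "bracket_win V 1 3 2 4 \<le> bracket_win V 1 4 2 3"
    using bracket_win_weaker_semifinal_opponent pos assms(7) by simp
  ultimately have "pw V 1 2 * (pw V 3 4 - pw V 4 3)
      * (bracket_win V 1 4 2 3 - bracket_win V 1 3 2 4) \<ge> 0"
    by simp
  moreover have "V 1 + V 2 \<noteq> 0" "V 3 + V 4 \<noteq> 0" using pos by simp_all
  ultimately show ?thesis using P1_try_minus_lose_last_week[OF assms(1-4)] by fastforce
qed

end
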